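(* Let $m\in\mathbb{N}$ be odd and write $m=2k+1$. Let $\varepsilon=1$ if $k$ is even and $3\nmid k$, and $\varepsilon=0$ otherwise. Then the friendship graph $F_j$ is $\mathbb{Z}_m$-cordial for every integer $j$ with $\lfloor m/2\rfloor\le j\le\lfloor 2m/3\rfloor-\varepsilon$.
   Context: Graphs are finite, simple and undirected. For $n\in\mathbb{N}$, the friendship graph $F_n$ is the union of $n$ copies of the triangle $C_3$ joined at a single common (central) vertex. For an abelian group $A$ and a graph $G=(V,E)$, a vertex labeling $\ell:V\to A$ induces an edge labeling $\ell(\{v_1,v_2\})=\ell(v_1)+\ell(v_2)$. Let $f_V(a)=|\{v\in V:\ell(v)=a\}|$ and $f_E(a)=|\{e\in E:\ell(e)=a\}|$. The labeling is $A$-cordial if $|f_V(a_1)-f_V(a_2)|\le 1$ and $|f_E(a_1)-f_E(a_2)|\le 1$ for all $a_1,a_2\in A$; $G$ is $A$-cordial if it admits an $A$-cordial labeling. *)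

theory Defs
  imports Main
begin

text \<open>A finite simple graph is given by a vertex set V and a set E of 2-element
  subsets of V. The cyclic group Z_m is represented by the residues {0..<m}
  with addition modulo m.\<close>

definition friendship_verts :: "nat \<Rightarrow> nat set" where
  "friendship_verts n = {0..2*n}"

definition friendship_edges :: "nat \<Rightarrow> nat set set" where
  "friendship_edges n =
     {{0, i} | i. i \<in> {1..2*n}} \<union> {{2*i - 1, 2*i} | i. i \<in> {1..n}}"

definition edge_label :: "nat \<Rightarrow> ('a \<Rightarrow> nat) \<Rightarrow> 'a set \<Rightarrow> nat" where
  "edge_label m l e = (\<Sum>v\<in>e. l v) mod m"

definition vcount :: "'a set \<Rightarrow> ('a \<Rightarrow> nat) \<Rightarrow> nat \<Rightarrow> nat" where
  "vcount V l a = card {v\<in>V. l v = a}"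

definition ecount :: "nat \<Rightarrow> 'a set set \<Rightarrow> ('a \<Rightarrow> nat) \<Rightarrow> nat \<Rightarrow> nat" where
  "ecount m E l a = card {e\<in>E. edge_label m l e = a}"

definition Zm_cordial_labeling :: "nat \<Rightarrow> 'a set \<Rightarrow> 'a set set \<Rightarrow> ('a \<Rightarrow> nat) \<Rightarrow> bool" where
  "Zm_cordial_labeling m V E l \<longleftrightarrow>
     (\<forall>v\<in>V. l v < m) \<and>
     (\<forall>a1<m. \<forall>a2<m.
        \<bar>int (vcount V l a1) - int (vcount V l a2)\<bar> \<le> 1 \<and>
        \<bar>int (ecount m E l a1) - int (ecount m E l a2)\<bar> \<le> 1)"

definition Zm_cordial :: "nat \<Rightarrow> 'a set \<Rightarrow> 'a set set \<Rightarrow> bool" where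
  "Zm_cordial m V E \<longleftrightarrow> (\<exists>l. Zm_cordial_labeling m V E l)"

end

theory Submission
  imports Defs "HOL-Library.Multiset"
begin

text \<open>Label the centre by 0 and the two outer vertices of every triangle by integers a, b
  from the balanced residue system [-k, k] of Z_m; the spokes then repeat the outer vertex
  labels and the rim edge of the triangle carries a + b mod m. As 2j + 1 and 3j both lie
  between m and 2m, it suffices that the vertex labels split into a complete residue system
  plus distinct residues, and likewise the edge labels. For j = k + r with 3r \<le> k + 1, put
  n = k - r and p = \<lceil>n/2\<rceil>; the triangles (p - i, -(p + i)), (p + i, i - p) for 0 < i < p,
  (p, -p), (x, -x) for 2p \<le> x \<le> n, and the doubled triangles (b, b), (-b, -b) for
  n < b \<le> k do this. The only other case allowed by the bound on j is k = 6s + 1, j = 8s + 2,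
  where every residue must occur on exactly two edges; there the triangles (3i + 1, 3i + 2),
  their negatives, two triangles (k, -k) and triangles pairing 3i + 1 with multiples of 3
  give both systems.\<close>

definition residue :: "nat \<Rightarrow> int \<Rightarrow> nat" where
  "residue m x = nat (x mod int m)"

lemma residue_less: "0 < m \<Longrightarrow> residue m x < m"
  unfolding residue_def by (simp add: nat_less_iff)

lemma residue_0 [simp]: "residue m 0 = 0"
  unfolding residue_def by simp

lemma residue_add:
  assumes "0 < m" "int m dvd a + b - c"
  shows "(residue m a + residue m b) mod m = residue m c"
proof -
  have "int ((residue m a + residue m b) mod m) = (a mod int m + b mod int m) mod int m"
    unfolding residue_def using assms(1) by (simp add: of_nat_mod)
  also have "\<dots> = c mod int m"
    using assms(2) by (simp add: mod_add_eq mod_eq_dvd_iff)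
  finally show ?thesis
    unfolding residue_def using assms(1) by simp
qed

lemma bij_betw_residue: "bij_betw (residue (2*k+1)) {-int k..int k} {..<2*k+1}"
proof (rule bij_betw_imageI)
  show "inj_on (residue (2*k+1)) {-int k..int k}"
  proof (rule inj_onI)
    fix x y assume "x \<in> {-int k..int k}" "y \<in> {-int k..int k}"
      and "residue (2*k+1) x = residue (2*k+1) y"
    then have "(2*int k+1) dvd x - y" "\<bar>x - y\<bar> < 2*int k+1"
      unfolding residue_def by (auto simp: eq_nat_nat_iff mod_eq_dvd_iff ac_simps)
    then show "x = y"
      using dvd_imp_le_int[of "x - y" "2*int k+1"] by fastforce
  qed
  show "residue (2*k+1) ` {-int k..int k} = {..<2*k+1}"
  proof
    show "residue (2*k+1) ` {-int k..int k} \<subseteq> {..<2*k+1}"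
      by (auto simp: residue_less)
    show "{..<2*k+1} \<subseteq> residue (2*k+1) ` {-int k..int k}"
    proof
      fix x assume x: "x \<in> {..<2*k+1}"
      show "x \<in> residue (2*k+1) ` {-int k..int k}"
      proof (cases "x \<le> k")
        case True
        then show ?thesis
          using x by (intro image_eqI[of _ _ "int x"]) (auto simp: residue_def)
      next
        case False
        then show ?thesis
          using x by (intro image_eqI[of _ _ "int x - int (2*k+1)"])
            (auto simp: residue_def)
      qed
    qed
  qed
qed

definition distinct_balanced :: "nat \<Rightarrow> int list \<Rightarrow> bool" where
  "distinct_balanced k W \<longleftrightarrow> distinct W \<and> set W \<subseteq> {-int k..int k}"

lemma count_residues_le_1:
  assumes "distinct_balanced k W"
  shows "count (image_mset (residue (2*k+1)) (mset W)) x \<le> 1"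
proof -
  have "distinct (map (residue (2*k+1)) W)"
    using assms bij_betw_residue[of k]
    by (auto simp: distinct_balanced_def distinct_map bij_betw_def intro: inj_on_subset)
  then show ?thesis
    by (simp add: distinct_count_atmost_1 flip: mset_map)
qed

lemma count_residues_eq_1:
  assumes "distinct_balanced k W" "length W = 2*k+1" "x < 2*k+1"
  shows "count (image_mset (residue (2*k+1)) (mset W)) x = 1"
proof -
  have "set W = {-int k..int k}"
    using assms(1,2) by (intro card_subset_eq) (auto simp: distinct_balanced_def distinct_card)
  then have "x \<in># image_mset (residue (2*k+1)) (mset W)"
    using assms(3) bij_betw_residue[of k] by (auto simp: bij_betw_def)
  then show ?thesis
    using count_residues_le_1[OF assms(1), of x] by (simp add: Suc_le_eq le_antisym)
qed

lemma count_residues_1_or_2: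
  assumes "distinct_balanced k W1" "length W1 = 2*k+1" "distinct_balanced k W2" "x < 2*k+1"
  shows "count (image_mset (residue (2*k+1)) (mset W1 + mset W2)) x \<in> {1, 2}"
  using count_residues_eq_1[OF assms(1,2,4)] count_residues_le_1[OF assms(3), of x] by auto

lemma Zm_cordial_labelingI:
  assumes "\<forall>v\<in>V. l v < m"
    and "\<forall>a<m. vcount V l a \<in> {p, p+1}" and "\<forall>a<m. ecount m E l a \<in> {q, q+1}"
  shows "Zm_cordial_labeling m V E l"
proof -
  have close: "\<bar>int x - int y\<bar> \<le> 1" if "x \<in> {r, r+1}" "y \<in> {r, r+1}" for x y r :: nat
    using that by auto
  show ?thesis
    unfolding Zm_cordial_labeling_def
  proof (intro conjI allI impI)
    fix a1 a2 assume a: "a1 < m" "a2 < m"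
    show "\<bar>int (vcount V l a1) - int (vcount V l a2)\<bar> \<le> 1"
      using a assms(2) by (intro close[of _ p]) simp_all
    show "\<bar>int (ecount m E l a1) - int (ecount m E l a2)\<bar> \<le> 1"
      using a assms(3) by (intro close[of _ q]) simp_all
  qed (use assms(1) in simp)
qed

lemma Zm_cordial_one: "Zm_cordial 1 V E"
  unfolding Zm_cordial_def Zm_cordial_labeling_def by auto

lemma card_eq_count_image_mset_set:
  assumes "finite A"
  shows "card {a\<in>A. f a = x} = count (image_mset f (mset_set A)) x"
  using assms by (simp add: count_image_mset Int_def conj_commute vimage_def)

lemma outer_verts_eq:
  "{1..2*j::nat} = (\<lambda>i. 2*i+1) ` {0..<j} \<union> (\<lambda>i. 2*i+2) ` {0..<j}"
proof -
  have "v \<in> (\<lambda>i. 2*i+1) ` {0..<j} \<union> (\<lambda>i. 2*i+2) ` {0..<j}" if "1 \<le> v" "v \<le> 2*j" for v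
  proof (cases "odd v")
    case True
    then have "v = 2*((v-1) div 2) + 1" by presburger
    then show ?thesis using that by (intro UnI1 image_eqI) auto
  next
    case False
    then have "v = 2*((v-1) div 2) + 2" using that by presburger
    then show ?thesis using that by (intro UnI2 image_eqI) auto
  qed
  then show ?thesis
    by (intro equalityI subsetI) (auto simp del: Un_iff)
qed

lemma mset_set_outer_verts:
  "mset_set {1..2*j::nat} =
     image_mset (\<lambda>i. 2*i+1) (mset_set {0..<j}) + image_mset (\<lambda>i. 2*i+2) (mset_set {0..<j})"
proof -
  have "(\<lambda>i. 2*i+1) ` {0..<j} \<inter> (\<lambda>i. 2*i+2) ` {0..<j} = {}"
    by auto presburger
  then show ?thesis
    unfolding outer_verts_eq by (simp add: mset_set_Union image_mset_mset_set inj_on_def)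
qed

lemma friendship_verts_eq: "friendship_verts j = insert 0 {1..2*j}"
  unfolding friendship_verts_def by auto

lemma friendship_edges_eq:
  "friendship_edges j = (\<lambda>v. {0, v}) ` {1..2*j} \<union> (\<lambda>i. {2*i+1, 2*i+2}) ` {0..<j}"
proof -
  have "{{2*i - 1, 2*i} | i. i \<in> {1..j}} = (\<lambda>i. {2*i+1, 2*i+2}) ` {0..<j}"
  proof (intro equalityI subsetI)
    fix e assume "e \<in> {{2*i - 1, 2*i} | i. i \<in> {1..j}}"
    then obtain i where "e = {2*i - 1, 2*i}" "i \<in> {1..j}" by blast
    then have "e = {2*(i-1)+1, 2*(i-1)+2}" "i - 1 \<in> {0..<j}" by auto
    then show "e \<in> (\<lambda>i. {2*i+1, 2*i+2}) ` {0..<j}" by blast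
  next
    fix e assume "e \<in> (\<lambda>i. {2*i+1, 2*i+2}) ` {0..<j}"
    then obtain i where "e = {2*(i+1) - 1, 2*(i+1)}" "i + 1 \<in> {1..j}" by auto
    then show "e \<in> {{2*i - 1, 2*i} | i. i \<in> {1..j}}" by blast
  qed
  then show ?thesis
    unfolding friendship_edges_def by blast
qed

lemma mset_set_friendship_edges:
  "mset_set (friendship_edges j) =
     image_mset (\<lambda>v. {0, v}) (mset_set {1..2*j}) +
     image_mset (\<lambda>i. {2*i+1, 2*i+2}) (mset_set {0..<j})"
proof -
  have "inj_on (\<lambda>v. {0::nat, v}) {1..2*j}" "inj_on (\<lambda>i. {2*i+1, 2*i+2::nat}) {0..<j}"
    by (auto simp: inj_on_def doubleton_eq_iff)
  then show ?thesis
    unfolding friendship_edges_eq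
    by (subst mset_set_Union) (auto simp: image_mset_mset_set)
qed

text \<open>The i-th triangle of F_j (counting from 0) has outer vertices 2i + 1 and 2i + 2; the
  triple T ! i = (a, b, c) labels them with a and b, and c is meant to represent the label
  a + b of the rim edge between them.\<close>

definition triangle_labeling :: "nat \<Rightarrow> (int \<times> int \<times> int) list \<Rightarrow> nat \<Rightarrow> nat" where
  "triangle_labeling m T v =
     (if v = 0 then 0
      else if odd v then residue m (fst (T ! ((v - 1) div 2)))
      else residue m (fst (snd (T ! ((v - 1) div 2)))))"

lemma mset_eq_image_mset_nth: "mset xs = image_mset ((!) xs) (mset_set {0..<length xs})"
  by (metis map_nth mset_map mset_upt)

lemma triangle_labeling_outer_verts:
  "image_mset (triangle_labeling m T) (mset_set {1..2 * length T}) =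
     image_mset (residue m) (mset (map fst T) + mset (map (fst \<circ> snd) T))"
proof -
  have "image_mset (triangle_labeling m T) (mset_set {1..2 * length T}) =
      image_mset (residue m \<circ> fst \<circ> (!) T) (mset_set {0..<length T}) +
      image_mset (residue m \<circ> fst \<circ> snd \<circ> (!) T) (mset_set {0..<length T})"
    unfolding mset_set_outer_verts image_mset_union image_mset.compositionality
    by (intro arg_cong2[where f = "(+)"] image_mset_cong) (simp_all add: triangle_labeling_def)
  then show ?thesis
    by (simp add: mset_eq_image_mset_nth[of T] image_mset.compositionality comp_assoc)
qed

lemma triangle_labeling_verts:
  "image_mset (triangle_labeling m T) (mset_set (friendship_verts (length T))) =
     image_mset (residue m) (add_mset 0 (mset (map fst T) + mset (map (fst \<circ> snd) T)))"
  using triangle_labeling_outer_verts[of m T]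
  by (simp add: friendship_verts_eq triangle_labeling_def)

lemma triangle_labeling_edges:
  assumes "0 < m" and "\<forall>(a, b, c)\<in>set T. int m dvd a + b - c"
  shows "image_mset (edge_label m (triangle_labeling m T)) (mset_set (friendship_edges (length T))) =
     image_mset (residue m)
       (mset (map fst T) + mset (map (fst \<circ> snd) T) + mset (map (snd \<circ> snd) T))"
proof -
  let ?l = "triangle_labeling m T"
  have spokes: "image_mset (edge_label m ?l \<circ> (\<lambda>v. {0, v})) (mset_set {1..2 * length T}) =
      image_mset ?l (mset_set {1..2 * length T})"
    using assms(1) by (intro image_mset_cong) (simp add: edge_label_def triangle_labeling_def residue_less)
  have rims: "image_mset (edge_label m ?l \<circ> (\<lambda>i. {2*i+1, 2*i+2})) (mset_set {0..<length T}) =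
      image_mset (residue m \<circ> snd \<circ> snd \<circ> (!) T) (mset_set {0..<length T})"
  proof (intro image_mset_cong)
    fix i assume "i \<in># mset_set {0..<length T}"
    then have "int m dvd fst (T!i) + fst (snd (T!i)) - snd (snd (T!i))"
      using assms(2) nth_mem[of i T] by (auto simp: case_prod_beta)
    then show "(edge_label m ?l \<circ> (\<lambda>i. {2*i+1, 2*i+2})) i =
        (residue m \<circ> snd \<circ> snd \<circ> (!) T) i"
      using assms(1) by (simp add: edge_label_def triangle_labeling_def residue_add)
  qed
  show ?thesis
    unfolding mset_set_friendship_edges image_mset_union image_mset.compositionality spokes rims
      triangle_labeling_outer_verts
    by (simp add: mset_eq_image_mset_nth[of T] image_mset.compositionality comp_assoc)
qed

lemma Zm_cordial_friendship_if_triangles: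
  fixes T :: "(int \<times> int \<times> int) list"
  assumes cong: "\<forall>(a, b, c)\<in>set T. int (2*k+1) dvd a + b - c"
    and verts: "add_mset 0 (mset (map fst T) + mset (map (fst \<circ> snd) T)) = mset V1 + mset V2"
    and edges: "mset (map fst T) + mset (map (fst \<circ> snd) T) + mset (map (snd \<circ> snd) T) =
      mset E1 + mset E2"
    and V: "distinct_balanced k V1" "length V1 = 2*k+1" "distinct_balanced k V2"
    and E: "distinct_balanced k E1" "length E1 = 2*k+1" "distinct_balanced k E2"
  shows "Zm_cordial (2*k+1) (friendship_verts (length T)) (friendship_edges (length T))"
proof -
  let ?l = "triangle_labeling (2*k+1) T"
  have finite: "finite (friendship_verts (length T))" "finite (friendship_edges (length T))"
    by (simp_all add: friendship_verts_def friendship_edges_eq)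
  have vcount: "vcount (friendship_verts (length T)) ?l a =
      count (image_mset (residue (2*k+1)) (mset V1 + mset V2)) a" for a
    unfolding vcount_def card_eq_count_image_mset_set[OF finite(1)] triangle_labeling_verts verts ..
  have "0 < 2*k+1" by simp
  note edge_labels = triangle_labeling_edges[OF this cong]
  have ecount: "ecount (2*k+1) (friendship_edges (length T)) ?l a =
      count (image_mset (residue (2*k+1)) (mset E1 + mset E2)) a" for a
    unfolding ecount_def card_eq_count_image_mset_set[OF finite(2)] edge_labels edges ..
  have "Zm_cordial_labeling (2*k+1) (friendship_verts (length T)) (friendship_edges (length T)) ?l"
  proof (rule Zm_cordial_labelingI[where p = 1 and q = 1])
    show "\<forall>v\<in>friendship_verts (length T). ?l v < 2*k+1"
      by (simp add: triangle_labeling_def residue_less)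
    show "\<forall>a<2*k+1. vcount (friendship_verts (length T)) ?l a \<in> {1, 1+1}"
      unfolding vcount using count_residues_1_or_2[OF V] by (simp add: numeral_2_eq_2)
    show "\<forall>a<2*k+1. ecount (2*k+1) (friendship_edges (length T)) ?l a \<in> {1, 1+1}"
      unfolding ecount using count_residues_1_or_2[OF E] by (simp add: numeral_2_eq_2)
  qed
  then show ?thesis
    unfolding Zm_cordial_def by blast
qed

text \<open>The complete system consists of the centre's label and the labels of the outer vertices
  except the second ones of T2. Since the spokes repeat the outer vertex labels, it reappears
  among the edge labels once a rim label 0 stands in for the centre.\<close>

lemma Zm_cordial_friendship_if_split_triangles:
  fixes T1 T2 :: "(int \<times> int \<times> int) list"
  assumes "\<forall>(a, b, c)\<in>set (T1 @ T2). int (2*k+1) dvd a + b - c"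
    and "0 \<in> snd ` snd ` set (T1 @ T2)"
    and "distinct_balanced k (0 # map fst (T1 @ T2) @ map (fst \<circ> snd) T1)"
    and "length (0 # map fst (T1 @ T2) @ map (fst \<circ> snd) T1) = 2*k+1"
    and "distinct_balanced k (map (fst \<circ> snd) T2)"
    and "distinct_balanced k (map (fst \<circ> snd) T2 @ remove1 0 (map (snd \<circ> snd) (T1 @ T2)))"
  shows "Zm_cordial (2*k+1)
    (friendship_verts (length (T1 @ T2))) (friendship_edges (length (T1 @ T2)))"
proof (rule Zm_cordial_friendship_if_triangles[OF assms(1) _ _ assms(3) _ assms(5) assms(3) _ assms(6)])
  have "0 \<in># mset (map (snd \<circ> snd) (T1 @ T2))"
    using assms(2) by force
  then show "mset (map fst (T1 @ T2)) + mset (map (fst \<circ> snd) (T1 @ T2)) +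
      mset (map (snd \<circ> snd) (T1 @ T2)) =
      mset (0 # map fst (T1 @ T2) @ map (fst \<circ> snd) T1) +
      mset (map (fst \<circ> snd) T2 @ remove1 0 (map (snd \<circ> snd) (T1 @ T2)))"
    by (simp add: mset_remove1 ac_simps)
qed (use assms(4) in simp_all)

lemma Zm_cordial_friendship_small_excess:
  fixes k r :: nat
  assumes "0 < k" "3 * r \<le> k + 1"
  shows "Zm_cordial (2*k+1) (friendship_verts (k + r)) (friendship_edges (k + r))"
proof -
  define K where "K = int k"
  define N where "N = int k - int r"
  define P where "P = (N + 1) div 2"
  have N: "1 \<le> N" "3 * (K - N) \<le> K + 1" "N \<le> K"
    using assms unfolding K_def N_def by auto
  have P: "1 \<le> P" "N = 2*P - 1 \<or> N = 2*P"
    using N(1) unfolding P_def by auto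
  define T1 where "T1 =
      (P, -P, 0)
    # map (\<lambda>i. (P - i, -(P + i), -2*i)) [1..P-1]
    @ map (\<lambda>i. (P + i, i - P, 2*i)) [1..P-1]
    @ map (\<lambda>x. (x, -x, 0)) [2*P..N]"
  define T2 where "T2 =
      map (\<lambda>b. (b, b, 2*b - (2*K+1))) [N+1..K]
    @ map (\<lambda>b. (-b, -b, 2*K+1 - 2*b)) [N+1..K]"
  have "length (T1 @ T2) = k + r"
    using N P unfolding T1_def T2_def K_def N_def by auto
  moreover have "Zm_cordial (2*k+1)
      (friendship_verts (length (T1 @ T2))) (friendship_edges (length (T1 @ T2)))"
  proof (rule Zm_cordial_friendship_if_split_triangles)
    show "\<forall>(a, b, c)\<in>set (T1 @ T2). int (2*k+1) dvd a + b - c"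
      unfolding T1_def T2_def K_def
      by (auto simp: ac_simps) (metis add_uminus_conv_diff dvd_minus_iff dvd_refl minus_add_distrib)
    show "0 \<in> snd ` snd ` set (T1 @ T2)"
      unfolding T1_def by simp
    show "distinct_balanced k (0 # map fst (T1 @ T2) @ map (fst \<circ> snd) T1)"
      using N P unfolding distinct_balanced_def T1_def T2_def K_def[symmetric]
      by (auto simp: distinct_map inj_on_def)
    show "length (0 # map fst (T1 @ T2) @ map (fst \<circ> snd) T1) = 2*k+1"
      using N P unfolding T1_def T2_def K_def by auto
    show "distinct_balanced k (map (fst \<circ> snd) T2)"
      using N P unfolding distinct_balanced_def T2_def K_def[symmetric]
      by (auto simp: distinct_map inj_on_def)
    txt \<open>The rim labels \<plusminus>2i are even with 2i < 2p \<le> n + 1, the rim labels \<plusminus>(m - 2b) are odd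
      with m - 2b \<le> 2r - 1 \<le> n by 3r \<le> k + 1, the repeated labels \<plusminus>b exceed n, and at
      most one rim label 0 remains.\<close>
    show "distinct_balanced k (map (fst \<circ> snd) T2 @ remove1 0 (map (snd \<circ> snd) (T1 @ T2)))"
      using N P unfolding distinct_balanced_def T1_def T2_def K_def[symmetric]
      by (auto simp: distinct_map inj_on_def; presburger)
  qed
  ultimately show ?thesis
    by simp
qed

lemma Zm_cordial_friendship_extremal:
  fixes k s :: nat
  assumes "k = 6*s+1"
  shows "Zm_cordial (2*k+1) (friendship_verts (8*s+2)) (friendship_edges (8*s+2))"
proof -
  define S where "S = int s"
  define K where "K = int k"
  \<comment> \<open>the representative in [-k, k] of (3i + 1) + (3i + 2)\<close>
  define c where "c i = (if i < S then 6*i+3 else 6*i - 12*S)" for i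
  define T1 where "T1 =
      map (\<lambda>i. (3*i+1, 3*i+2, c i)) [0..2*S-1]
    @ map (\<lambda>i. (-(3*i+1), -(3*i+2), - c i)) [0..2*S-1]"
  define T2 where "T2 =
      (K, -K, 0) # (-K, K, 0)
    # map (\<lambda>i. (- c i, 3*i+1, -(3*i+2))) [0..2*S-1]
    @ map (\<lambda>i. (c i, -(3*i+1), 3*i+2)) [0..2*S-1]"
  have S: "0 \<le> S" "K = 6*S+1"
    unfolding S_def K_def assms by simp_all
  have c_nonzero: "c i \<noteq> 0" if "0 \<le> i" "i < 2*S" for i
    using that unfolding c_def by auto
  have "length (T1 @ T2) = 8*s+2"
    using S unfolding T1_def T2_def S_def by auto
  moreover have "Zm_cordial (2*k+1)
      (friendship_verts (length (T1 @ T2))) (friendship_edges (length (T1 @ T2)))"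
  proof (rule Zm_cordial_friendship_if_split_triangles)
    show "\<forall>(a, b, c)\<in>set (T1 @ T2). int (2*k+1) dvd a + b - c"
      unfolding T1_def T2_def c_def S_def K_def assms
      by (auto simp: ac_simps) (metis add_uminus_conv_diff dvd_minus_iff dvd_refl minus_add_distrib)+
    show "0 \<in> snd ` snd ` set (T1 @ T2)"
      unfolding T2_def by simp
    show complete: "distinct_balanced k (0 # map fst (T1 @ T2) @ map (fst \<circ> snd) T1)"
      using S unfolding distinct_balanced_def T1_def T2_def K_def[symmetric] c_def
      by (auto simp: distinct_map inj_on_def split: if_splits; presburger)
    show "length (0 # map fst (T1 @ T2) @ map (fst \<circ> snd) T1) = 2*k+1"
      using S unfolding T1_def T2_def S_def K_def by auto
    show "distinct_balanced k (map (fst \<circ> snd) T2)"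
      using S unfolding distinct_balanced_def T2_def K_def[symmetric]
      by (auto simp: distinct_map inj_on_def)
    have remove_zero: "remove1 0 (map (snd \<circ> snd) (T1 @ T2)) = map (snd \<circ> snd) (T1 @ tl T2)"
      using c_nonzero unfolding T1_def T2_def by (auto simp: remove1_append)
    have "mset (map (fst \<circ> snd) T2 @ remove1 0 (map (snd \<circ> snd) (T1 @ T2))) =
        mset (0 # map fst (T1 @ T2) @ map (fst \<circ> snd) T1)"
      unfolding remove_zero T1_def T2_def by (simp add: o_def ac_simps)
    then show "distinct_balanced k (map (fst \<circ> snd) T2 @ remove1 0 (map (snd \<circ> snd) (T1 @ T2)))"
      using complete unfolding distinct_balanced_def by (metis mset_eq_imp_distinct_iff mset_eq_setD)
  qed
  ultimately show ?thesis
    by simp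
qed

lemma excess_cases:
  fixes k r \<epsilon> :: nat
  assumes "\<epsilon> = (if even k \<and> \<not> 3 dvd k then 1 else 0)" and "3 * r + 3 * \<epsilon> \<le> k + 2"
  obtains (trivial) "k = 0" | (small) "0 < k" "3 * r \<le> k + 1"
    | (extremal) s where "k = 6*s+1" "r = 2*s+1"
proof (cases "k = 0 \<or> 3 * r \<le> k + 1")
  case True
  then show ?thesis
    using that(1,2) by auto
next
  case False
  then have r: "3 * r = k + 2" and "\<epsilon> = 0"
    using assms(2) by linarith+
  have "\<not> 3 dvd k"
    using r by presburger
  then have "odd k"
    using \<open>\<epsilon> = 0\<close> assms(1) by (auto split: if_splits)
  then have "odd (3 * r)"
    unfolding r by simp
  then obtain s where "r = 2*s + 1"
    by (auto elim: oddE)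
  then show ?thesis
    using that(3)[of s] r by linarith
qed

theorem theorem11p2:
  fixes m k j :: nat and \<epsilon> :: nat
  assumes "odd m" and "m = 2*k + 1"
    and "\<epsilon> = (if even k \<and> \<not> 3 dvd k then 1 else 0)"
    and "m div 2 \<le> j" and "int j \<le> int ((2*m) div 3) - int \<epsilon>"
  shows "Zm_cordial m (friendship_verts j) (friendship_edges j)"
proof -
  define r where "r = j - k"
  have "3 * ((2*m) div 3) \<le> 2*m"
    by simp
  then have j: "j = k + r" "3 * r + 3 * \<epsilon> \<le> k + 2"
    using assms(2,4,5) unfolding r_def by auto
  from assms(3) j(2) show ?thesis
  proof (cases rule: excess_cases)
    case trivial
    then show ?thesis
      using assms(2) Zm_cordial_one by simp
  next
    case small
    then show ?thesis
      using Zm_cordial_friendship_small_excess[of k r] assms(2) j(1) by simp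
  next
    case (extremal s)
    then show ?thesis
      using Zm_cordial_friendship_extremal[of k s] assms(2) j(1) by simp
  qed
qed

end
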